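(* Let $G$ be a simple directed graph on $[n]$ and let $\sigma\subseteq[n]$. (1) If $\sigma$ is not a clique of $G$, then $\sigma$ is not a stable motif of $W(G,\varepsilon,\delta)$ for any legal $\varepsilon,\delta$ such that $$\delta > \frac{\varepsilon}{1-\varepsilon}\,(|\sigma|^2-|\sigma|-1).$$ (2) If the induced subgraph $G|_\sigma$ has maximum in-degree $d^{in}_{\max}=d<|\sigma|-1$, then $\sigma$ is not a stable motif of $W(G,\varepsilon,\delta)$ for any legal $\varepsilon,\delta$ such that $$\delta>\frac{\varepsilon d}{|\sigma|-1-d}.$$
   Context: Let $G$ be a simple directed graph (no self-loops, no multiple edges) on vertex set $[n]=\{1,\dots,n\}$; $j\to i$ denotes an edge from $j$ to $i$. Parameters $\varepsilon,\delta$ are in the legal range if $\delta>0$ and $0<\varepsilon<\frac{\delta}{\delta+1}$. The combinatorial threshold-linear network (CTLN) $W=W(G,\varepsilon,\delta)$ is the $n\times n$ matrix with $W_{ii}=0$, $W_{ij}=-1+\varepsilon$ if $j\to i$ in $G$, and $W_{ij}=-1-\delta$ if $i\ne j$ and $j\not\to i$; its dynamics are $\dot x_i=-x_i+[\sum_j W_{ij}x_j+\theta]_+$ with $\theta>0$. CTLNs are assumed nondegenerate: $\det(I-W_\sigma)\neq0$ for all $\sigma$ and all Cramer's-rule determinants of $(I-W_\sigma)x=\theta 1_\sigma$ are nonzero. For $\sigma\subseteq[n]$, $W_\sigma$ is the principal submatrix indexed by $\sigma$ (the CTLN of the induced subgraph $G|_\sigma$). $\sigma$ is a permitted motif if $W_\sigma$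 has a fixed point with full support $\sigma$, i.e. $\theta(I-W_\sigma)^{-1}1_\sigma$ has all entries positive; $\sigma$ is a stable motif if it is permitted and all eigenvalues of $I-W_\sigma$ have positive real part. A clique is a set of nodes that are pairwise bidirectionally connected (singletons are cliques). In-degrees in $G|_\sigma$ count edges from nodes of $\sigma$. *)

theory Defs
  imports Complex_Main "Jordan_Normal_Form.Determinant" "Jordan_Normal_Form.Char_Poly"
begin

(* A directed graph on [n] = {1..n} is a relation G :: nat => nat => bool,
   where  G j i  means the edge  j -> i. *)

definition simple_digraph :: "nat \<Rightarrow> (nat \<Rightarrow> nat \<Rightarrow> bool) \<Rightarrow> bool" where
  "simple_digraph n G \<longleftrightarrow> (\<forall>i\<in>{1..n}. \<not> G i i)"

definition legal_params :: "real \<Rightarrow> real \<Rightarrow> bool" where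
  "legal_params \<epsilon> \<delta> \<longleftrightarrow> \<delta> > 0 \<and> 0 < \<epsilon> \<and> \<epsilon> < \<delta> / (\<delta> + 1)"

definition ctln :: "(nat \<Rightarrow> nat \<Rightarrow> bool) \<Rightarrow> real \<Rightarrow> real \<Rightarrow> nat \<Rightarrow> nat \<Rightarrow> real" where
  "ctln G \<epsilon> \<delta> i j = (if i = j then 0 else if G j i then -1 + \<epsilon> else -1 - \<delta>)"

definition ctln_sub :: "(nat \<Rightarrow> nat \<Rightarrow> bool) \<Rightarrow> real \<Rightarrow> real \<Rightarrow> nat set \<Rightarrow> real mat" where
  "ctln_sub G \<epsilon> \<delta> \<sigma> =
     (let s = sorted_list_of_set \<sigma>
      in mat (card \<sigma>) (card \<sigma>) (\<lambda>(i, j). ctln G \<epsilon> \<delta> (s ! i) (s ! j)))"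

definition IminusW :: "(nat \<Rightarrow> nat \<Rightarrow> bool) \<Rightarrow> real \<Rightarrow> real \<Rightarrow> nat set \<Rightarrow> real mat" where
  "IminusW G \<epsilon> \<delta> \<sigma> = 1\<^sub>m (card \<sigma>) - ctln_sub G \<epsilon> \<delta> \<sigma>"

(* nondegeneracy: det(I - W_tau) <> 0 for all tau, and all Cramer's-rule determinants of
   (I - W_tau) x = theta 1_tau are nonzero *)
definition nondegenerate :: "nat \<Rightarrow> (nat \<Rightarrow> nat \<Rightarrow> bool) \<Rightarrow> real \<Rightarrow> real \<Rightarrow> real \<Rightarrow> bool" where
  "nondegenerate n G \<epsilon> \<delta> \<theta> \<longleftrightarrow>
     (\<forall>\<tau>. \<tau> \<subseteq> {1..n} \<longrightarrow>
        det (IminusW G \<epsilon> \<delta> \<tau>) \<noteq> 0 \<and>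
        (\<forall>k < card \<tau>.
           det (mat (card \<tau>) (card \<tau>)
                 (\<lambda>(i, j). if j = k then \<theta> else IminusW G \<epsilon> \<delta> \<tau> $$ (i, j))) \<noteq> 0))"

(* fixed point of the TLN  dx/dt = -x + [W x + theta]_+  with matrix W_sigma *)
definition fixed_point_sub ::
  "(nat \<Rightarrow> nat \<Rightarrow> bool) \<Rightarrow> real \<Rightarrow> real \<Rightarrow> real \<Rightarrow> nat set \<Rightarrow> real vec \<Rightarrow> bool" where
  "fixed_point_sub G \<epsilon> \<delta> \<theta> \<sigma> x \<longleftrightarrow>
     x \<in> carrier_vec (card \<sigma>) \<and>
     (\<forall>i < card \<sigma>. x $ i = max 0 ((ctln_sub G \<epsilon> \<delta> \<sigma> *\<^sub>v x) $ i + \<theta>))"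

definition permitted_motif :: "(nat \<Rightarrow> nat \<Rightarrow> bool) \<Rightarrow> real \<Rightarrow> real \<Rightarrow> real \<Rightarrow> nat set \<Rightarrow> bool" where
  "permitted_motif G \<epsilon> \<delta> \<theta> \<sigma> \<longleftrightarrow>
     (\<exists>x. fixed_point_sub G \<epsilon> \<delta> \<theta> \<sigma> x \<and> (\<forall>i < card \<sigma>. x $ i > 0))"

definition stable_motif :: "(nat \<Rightarrow> nat \<Rightarrow> bool) \<Rightarrow> real \<Rightarrow> real \<Rightarrow> real \<Rightarrow> nat set \<Rightarrow> bool" where
  "stable_motif G \<epsilon> \<delta> \<theta> \<sigma> \<longleftrightarrow>
     permitted_motif G \<epsilon> \<delta> \<theta> \<sigma> \<and>
     (\<forall>z::complex. eigenvalue (map_mat complex_of_real (IminusW G \<epsilon> \<delta> \<sigma>)) z \<longrightarrow> Re z > 0)"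

definition is_clique :: "(nat \<Rightarrow> nat \<Rightarrow> bool) \<Rightarrow> nat set \<Rightarrow> bool" where
  "is_clique G \<sigma> \<longleftrightarrow> (\<forall>i\<in>\<sigma>. \<forall>j\<in>\<sigma>. i \<noteq> j \<longrightarrow> G i j \<and> G j i)"

definition in_degree_sub :: "(nat \<Rightarrow> nat \<Rightarrow> bool) \<Rightarrow> nat set \<Rightarrow> nat \<Rightarrow> nat" where
  "in_degree_sub G \<sigma> i = card {j \<in> \<sigma>. j \<noteq> i \<and> G j i}"

definition max_in_degree_sub :: "(nat \<Rightarrow> nat \<Rightarrow> bool) \<Rightarrow> nat set \<Rightarrow> nat" where
  "max_in_degree_sub G \<sigma> = Max (in_degree_sub G \<sigma> ` \<sigma>)"

end

theory Submission
  imports Defs "Jordan_Normal_Form.Schur_Decomposition" "Jordan_Normal_Form.Spectral_Radius"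
begin

text \<open>
  Only the spectral half of stability is needed: let \<open>A = I - W\<^sub>\<sigma>\<close> be \<open>k \<times> k\<close> with all
  eigenvalues \<open>\<lambda>\<^sub>i\<close> in the right half-plane. Its diagonal is \<open>1\<close>, so \<open>\<Sum> Re \<lambda>\<^sub>i = tr A = k\<close>.

  (1) Triangularising \<open>A\<close> gives \<open>tr A\<^sup>2 = \<Sum> Re (\<lambda>\<^sub>i\<^sup>2) \<le> \<Sum> (Re \<lambda>\<^sub>i)\<^sup>2 < (\<Sum> Re \<lambda>\<^sub>i)\<^sup>2 = k\<^sup>2\<close>
  once \<open>k \<ge> 2\<close>. On the other hand \<open>tr A\<^sup>2 = \<Sum>\<^sub>i\<^sub>j A\<^sub>i\<^sub>j A\<^sub>j\<^sub>i\<close>, where every off-diagonal product is at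
  least \<open>(1 - \<epsilon>)\<^sup>2 \<ge> 1 - 2\<epsilon>\<close> and a missing edge contributes two products at least
  \<open>(1 + \<delta>)(1 - \<epsilon>)\<close>; the bound on \<open>\<delta>\<close> makes this total at least \<open>k\<^sup>2\<close>.

  (2) \<open>A\<close> is entrywise nonnegative and each row sum is
  \<open>1 + (1 + \<delta>)(k - 1) - (\<epsilon> + \<delta>) d\<^sub>i\<^sub>n > k\<close>. A nonnegative matrix has an eigenvalue whose real
  part is at least its smallest row sum, whereas every \<open>Re \<lambda>\<^sub>i \<le> \<Sum> Re \<lambda>\<^sub>j = k\<close>.
\<close>

section \<open>Traces and eigenvalues\<close>

definition trace_mat :: "'a::comm_ring_1 mat \<Rightarrow> 'a" where
  "trace_mat A = (\<Sum>i<dim_row A. A $$ (i, i))"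

lemma trace_mat_mult_comm:
  assumes "A \<in> carrier_mat n m" "B \<in> carrier_mat m n"
  shows "trace_mat (A * B) = trace_mat (B * A)"
proof -
  have "trace_mat (A * B) = (\<Sum>i<n. \<Sum>j<m. A $$ (i, j) * B $$ (j, i))"
    using assms by (simp add: trace_mat_def scalar_prod_def atLeast0LessThan)
  also have "\<dots> = (\<Sum>j<m. \<Sum>i<n. B $$ (j, i) * A $$ (i, j))"
    by (subst sum.swap) (simp add: mult.commute)
  also have "\<dots> = trace_mat (B * A)"
    using assms by (simp add: trace_mat_def scalar_prod_def atLeast0LessThan)
  finally show ?thesis .
qed

lemma trace_mat_similar:
  assumes A: "A \<in> carrier_mat n n" and sim: "similar_mat_wit A B P Q"
  shows "trace_mat A = trace_mat B"
proof -
  from similar_mat_witD2[OF A sim] have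
    carr: "B \<in> carrier_mat n n" "P \<in> carrier_mat n n" "Q \<in> carrier_mat n n"
    and QP: "Q * P = 1\<^sub>m n" and ABPQ: "A = P * B * Q" by auto
  have "trace_mat A = trace_mat (P * (B * Q))"
    using carr by (simp add: ABPQ assoc_mult_mat[of P n n B n Q n])
  also have "\<dots> = trace_mat (B * Q * P)"
    using carr by (simp add: trace_mat_mult_comm[of P n n "B * Q"])
  also have "\<dots> = trace_mat B"
    using carr by (simp add: QP assoc_mult_mat[of B n n Q n P n])
  finally show ?thesis .
qed

lemma trace_mat_of_real:
  assumes "A \<in> carrier_mat n n"
  shows "trace_mat (map_mat complex_of_real A) = complex_of_real (trace_mat A)"
  using assms by (simp add: trace_mat_def)

lemma upper_triangular_square_diag:
  fixes B :: "'a::comm_ring_1 mat"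
  assumes B: "B \<in> carrier_mat n n" "upper_triangular B" and i: "i < n"
  shows "(B * B) $$ (i, i) = B $$ (i, i) * B $$ (i, i)"
proof -
  have "(B * B) $$ (i, i) = (\<Sum>j<n. B $$ (i, j) * B $$ (j, i))"
    using B i by (simp add: scalar_prod_def atLeast0LessThan)
  also have "\<dots> = (\<Sum>j\<in>{i}. B $$ (i, j) * B $$ (j, i))"
  proof (intro sum.mono_neutral_right ballI)
    fix j assume "j \<in> {..<n} - {i}"
    then have "j < i \<and> j < n \<or> i < j \<and> j < n" by auto
    then show "B $$ (i, j) * B $$ (j, i) = 0"
      using B i unfolding upper_triangular_def by auto
  qed (use i in auto)
  finally show ?thesis by simp
qed

lemma eigenvalue_list_traces:
  fixes M :: "complex mat"
  assumes M: "M \<in> carrier_mat n n"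
  obtains es where "length es = n" "\<And>e. eigenvalue M e \<longleftrightarrow> e \<in> set es"
    "trace_mat M = sum_list es" "trace_mat (M * M) = sum_list (map (\<lambda>e. e * e) es)"
proof -
  obtain es where cp: "char_poly M = (\<Prod>e\<leftarrow>es. [:- e, 1:])" and len: "length es = n"
    using char_poly_factorized[OF M] by blast
  obtain B P Q where "schur_decomposition M es = (B, P, Q)"
    by (cases "schur_decomposition M es") auto
  from schur_decomposition[OF M cp this] have sim: "similar_mat_wit M B P Q"
    and ut: "upper_triangular B" and diag: "diag_mat B = es" by auto
  have B: "B \<in> carrier_mat n n" using similar_mat_witD2[OF M sim] by auto
  have sim2: "similar_mat_wit (M * M) (B * B) P Q"
    using similar_mat_wit_pow[OF sim, of 2] M B by (simp add: numeral_2_eq_2)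
  have es_nth: "es ! i = B $$ (i, i)" if "i < n" for i
    using that B by (simp add: diag[symmetric] diag_mat_def)
  have "eigenvalue M e \<longleftrightarrow> e \<in> set es" for e
    unfolding eigenvalue_root_char_poly[OF M] cp by (induct es) auto
  moreover have "trace_mat M = sum_list es"
    using trace_mat_similar[OF M sim] B len
    by (simp add: trace_mat_def sum_list_sum_nth atLeast0LessThan es_nth)
  moreover have "trace_mat (M * M) = sum_list (map (\<lambda>e. e * e) es)"
  proof -
    have "trace_mat (M * M) = trace_mat (B * B)"
      using M by (intro trace_mat_similar[OF _ sim2]) auto
    also have "\<dots> = (\<Sum>i<n. B $$ (i, i) * B $$ (i, i))"
      unfolding trace_mat_def using B
      by (intro sum.cong) (auto simp: upper_triangular_square_diag[OF B ut] simp del: index_mult_mat(1))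
    finally show ?thesis
      using len by (simp add: sum_list_sum_nth atLeast0LessThan es_nth)
  qed
  ultimately show thesis using that len by blast
qed

lemma sum_list_squares_le_square:
  fixes xs :: "real list"
  assumes "\<forall>x\<in>set xs. 0 \<le> x"
  shows "sum_list (map (\<lambda>x. x * x) xs) \<le> (sum_list xs)\<^sup>2"
  using assms
proof (induct xs)
  case (Cons a xs)
  then have "0 \<le> a * sum_list xs" by (simp add: sum_list_nonneg)
  with Cons show ?case by (simp add: power2_eq_square algebra_simps)
qed simp

lemma sum_list_squares_less_square:
  fixes xs :: "real list"
  assumes "2 \<le> length xs" "\<forall>x\<in>set xs. 0 < x"
  shows "sum_list (map (\<lambda>x. x * x) xs) < (sum_list xs)\<^sup>2"
proof -
  obtain a b ys where xs: "xs = a # b # ys"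
    using assms(1) by (cases xs rule: remdups_adj.cases) auto
  have "sum_list (map (\<lambda>x. x * x) (b # ys)) \<le> (sum_list (b # ys))\<^sup>2"
    using assms(2) by (intro sum_list_squares_le_square) (auto simp: xs)
  moreover have "0 < a * sum_list (b # ys)"
  proof -
    have "0 \<le> sum_list ys" using assms(2) by (intro sum_list_nonneg) (auto simp: xs)
    then show ?thesis using assms(2) by (simp add: xs)
  qed
  ultimately show ?thesis by (simp add: xs power2_eq_square algebra_simps)
qed

lemma Re_sum_list: "Re (sum_list zs) = sum_list (map Re zs)"
  by (induct zs) auto

lemma trace_square_less_if_eigenvalues_Re_pos:
  fixes A :: "real mat"
  assumes A: "A \<in> carrier_mat n n" and n: "2 \<le> n"
    and pos: "\<And>z. eigenvalue (map_mat complex_of_real A) z \<Longrightarrow> 0 < Re z"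
  shows "trace_mat (A * A) < (trace_mat A)\<^sup>2"
proof -
  let ?M = "map_mat complex_of_real A"
  have M: "?M \<in> carrier_mat n n" using A by simp
  obtain es where len: "length es = n" and ev: "\<And>e. eigenvalue ?M e \<longleftrightarrow> e \<in> set es"
    and tr1: "trace_mat ?M = sum_list es" and tr2: "trace_mat (?M * ?M) = sum_list (map (\<lambda>e. e * e) es)"
    using eigenvalue_list_traces[OF M] by blast
  have MM: "?M * ?M = map_mat complex_of_real (A * A)"
    using of_real_hom.mat_hom_mult[OF A A] by (rule sym)
  have "trace_mat (A * A) = Re (sum_list (map (\<lambda>e. e * e) es))"
    using tr2 trace_mat_of_real[of "A * A" n] A MM by (metis Re_complex_of_real mult_carrier_mat)
  also have "\<dots> = sum_list (map (\<lambda>e. Re e * Re e - Im e * Im e) es)"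
    by (simp add: Re_sum_list o_def)
  also have "\<dots> \<le> sum_list (map (\<lambda>x. x * x) (map Re es))"
    by (simp add: o_def sum_list_mono)
  also have "\<dots> < (sum_list (map Re es))\<^sup>2"
    using len n pos ev by (intro sum_list_squares_less_square) auto
  also have "sum_list (map Re es) = trace_mat A"
    using tr1 trace_mat_of_real[OF A] by (metis Re_complex_of_real Re_sum_list)
  finally show ?thesis .
qed

lemma Re_eigenvalue_le_trace:
  fixes A :: "real mat"
  assumes A: "A \<in> carrier_mat n n"
    and nonneg: "\<And>w. eigenvalue (map_mat complex_of_real A) w \<Longrightarrow> 0 \<le> Re w"
    and z: "eigenvalue (map_mat complex_of_real A) z"
  shows "Re z \<le> trace_mat A"
proof -
  let ?M = "map_mat complex_of_real A"
  obtain es where ev: "\<And>e. eigenvalue ?M e \<longleftrightarrow> e \<in> set es" and tr: "trace_mat ?M = sum_list es"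
    by (rule eigenvalue_list_traces[of ?M n]) (use A in auto)
  have "Re z \<le> sum_list (map Re es)"
    using z nonneg by (intro member_le_sum_list) (auto simp: ev)
  also have "\<dots> = trace_mat A"
    using tr trace_mat_of_real[OF A] by (metis Re_complex_of_real Re_sum_list)
  finally show ?thesis .
qed

section \<open>Dominant eigenvalues of nonnegative matrices\<close>

lemma eventually_norm_add_real_less:
  fixes \<mu> :: complex
  assumes "Re \<mu> < s"
  shows "eventually (\<lambda>c. cmod (\<mu> + complex_of_real c) < s + c) at_top"
proof -
  define a b where "a = Re \<mu>" and "b = Im \<mu>"
  have gap: "0 < s - a" using assms by (simp add: a_def)
  show ?thesis
    using eventually_gt_at_top[of "\<bar>a\<bar> + \<bar>s\<bar> + b\<^sup>2 / (s - a)"]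
  proof (rule eventually_mono)
    fix c assume c: "\<bar>a\<bar> + \<bar>s\<bar> + b\<^sup>2 / (s - a) < c"
    have "0 \<le> b\<^sup>2 / (s - a)" using gap by simp
    with c have c1: "\<bar>a\<bar> + \<bar>s\<bar> < c" and "b\<^sup>2 / (s - a) < c" by linarith+
    then have "b\<^sup>2 < (s - a) * c" using gap by (simp add: divide_less_eq mult.commute)
    also have "\<dots> \<le> (s - a) * (s + a + 2 * c)"
      using gap c1 by (intro mult_left_mono) auto
    finally have "(a + c)\<^sup>2 + b\<^sup>2 < (s + c)\<^sup>2"
      by (simp add: power2_eq_square algebra_simps)
    moreover have "(cmod (\<mu> + complex_of_real c))\<^sup>2 = (a + c)\<^sup>2 + b\<^sup>2"
      by (simp add: cmod_power2 a_def b_def)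
    ultimately have "(cmod (\<mu> + complex_of_real c))\<^sup>2 < (s + c)\<^sup>2" by simp
    then show "cmod (\<mu> + complex_of_real c) < s + c"
      by (rule power2_less_imp_less) (use c1 in linarith)
  qed
qed

lemma eigenvalue_shift_scale:
  fixes M :: "'a::field mat"
  assumes M: "M \<in> carrier_mat n n" and t: "t \<noteq> 0"
    and ev: "eigenvalue (inverse t \<cdot>\<^sub>m (M + c \<cdot>\<^sub>m 1\<^sub>m n)) \<nu>"
  shows "eigenvalue M (t * \<nu> - c)"
proof -
  let ?D = "inverse t \<cdot>\<^sub>m (M + c \<cdot>\<^sub>m 1\<^sub>m n)"
  have "char_matrix ?D \<nu> = inverse t \<cdot>\<^sub>m char_matrix M (t * \<nu> - c)"
    using M t by (intro eq_matI) (auto simp: char_matrix_def field_simps)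
  then have "det (char_matrix ?D \<nu>) = inverse t ^ n * det (char_matrix M (t * \<nu> - c))"
    using M by (simp add: char_matrix_def)
  moreover have "det (char_matrix ?D \<nu>) = 0"
    using ev M by (simp add: eigenvalue_det[of ?D n])
  ultimately show ?thesis
    using t M by (simp add: eigenvalue_det[OF M])
qed

lemma nonneg_mat_pow:
  fixes D :: "'a::linordered_semidom mat"
  assumes D: "D \<in> carrier_mat n n" and nonneg: "\<And>i j. i < n \<Longrightarrow> j < n \<Longrightarrow> 0 \<le> D $$ (i, j)"
    and "i < n" "j < n"
  shows "0 \<le> (D ^\<^sub>m m) $$ (i, j)"
  using assms(3,4)
proof (induct m arbitrary: j)
  case (Suc m)
  then show ?case
    using D nonneg by (auto simp: scalar_prod_def intro!: sum_nonneg mult_nonneg_nonneg)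
qed (use D in auto)

lemma row_sum_mat_pow_ge:
  fixes D :: "real mat"
  assumes D: "D \<in> carrier_mat n n" and nonneg: "\<And>i j. i < n \<Longrightarrow> j < n \<Longrightarrow> 0 \<le> D $$ (i, j)"
    and rows: "\<And>i. i < n \<Longrightarrow> q \<le> (\<Sum>j<n. D $$ (i, j))" and q: "0 \<le> q"
    and i: "i < n"
  shows "q ^ m \<le> (\<Sum>j<n. (D ^\<^sub>m m) $$ (i, j))"
proof (induct m)
  case 0
  show ?case using D i by (simp add: sum.delta)
next
  case (Suc m)
  have "q ^ Suc m \<le> (\<Sum>l<n. (D ^\<^sub>m m) $$ (i, l)) * q"
    using mult_left_mono[OF Suc q] by (simp add: mult.commute)
  also have "\<dots> \<le> (\<Sum>l<n. (D ^\<^sub>m m) $$ (i, l) * (\<Sum>j<n. D $$ (l, j)))"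
    unfolding sum_distrib_right
    using rows nonneg_mat_pow[OF D nonneg i] by (intro sum_mono mult_left_mono) auto
  also have "\<dots> = (\<Sum>j<n. \<Sum>l<n. (D ^\<^sub>m m) $$ (i, l) * D $$ (l, j))"
    unfolding sum_distrib_left by (rule sum.swap)
  also have "\<dots> = (\<Sum>j<n. (D ^\<^sub>m Suc m) $$ (i, j))"
    using D i by (simp add: scalar_prod_def atLeast0LessThan)
  finally show ?case .
qed

lemma row_sum_bound_le_1_if_spectral_radius_less_1:
  fixes D :: "real mat"
  assumes D: "D \<in> carrier_mat n n" and n: "0 < n"
    and nonneg: "\<And>i j. i < n \<Longrightarrow> j < n \<Longrightarrow> 0 \<le> D $$ (i, j)"
    and rows: "\<And>i. i < n \<Longrightarrow> q \<le> (\<Sum>j<n. D $$ (i, j))"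
    and radius: "spectral_radius (map_mat complex_of_real D) < 1"
  shows "q \<le> 1"
proof (rule ccontr)
  assume "\<not> q \<le> 1"
  then have q: "1 < q" by simp
  obtain bnd where bnd: "\<And>m. norm_bound (map_mat complex_of_real D ^\<^sub>m m) bnd"
    using spectral_radius_jnf_norm_bound_less_1_upper_triangular[OF _ radius] D by force
  have "q ^ m \<le> real n * bnd" for m
  proof -
    have "q ^ m \<le> (\<Sum>j<n. (D ^\<^sub>m m) $$ (0, j))"
      using q n by (intro row_sum_mat_pow_ge[OF D nonneg rows]) auto
    also have "\<dots> \<le> (\<Sum>j<n. bnd)"
    proof (intro sum_mono)
      fix j assume j: "j \<in> {..<n}"
      have "norm (map_mat complex_of_real (D ^\<^sub>m m) $$ (0, j)) \<le> bnd"
        using bnd[of m] j n D unfolding norm_bound_def of_real_hom.mat_hom_pow[OF D] by auto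
      then show "(D ^\<^sub>m m) $$ (0, j) \<le> bnd"
        using j n D by simp
    qed
    finally show ?thesis by simp
  qed
  moreover obtain m where "real n * bnd < q ^ m"
    using real_arch_pow[OF q] by blast
  ultimately show False by (meson not_less)
qed

text \<open>
  If every eigenvalue had real part below \<open>s < r\<close>, then for a large shift \<open>c\<close> the nonnegative
  matrix \<open>(A + c I) / (s + c)\<close> would have spectral radius below \<open>1\<close>, so bounded powers,
  while its row sums are at least \<open>(r + c) / (s + c) > 1\<close>.
\<close>

lemma nonneg_mat_eigenvalue_Re_ge_row_sum:
  fixes A :: "real mat"
  assumes A: "A \<in> carrier_mat n n" and n: "0 < n"
    and nonneg: "\<And>i j. i < n \<Longrightarrow> j < n \<Longrightarrow> 0 \<le> A $$ (i, j)"
    and rows: "\<And>i. i < n \<Longrightarrow> r \<le> (\<Sum>j<n. A $$ (i, j))"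
  shows "\<exists>z. eigenvalue (map_mat complex_of_real A) z \<and> r \<le> Re z"
proof -
  let ?A = "map_mat complex_of_real A"
  let ?S = "spectrum ?A"
  have A': "?A \<in> carrier_mat n n" using A by simp
  have S: "finite ?S" "?S \<noteq> {}"
    using card_finite_spectrum(1)[OF A'] spectrum_non_empty[OF A' n] by auto
  obtain z where z: "z \<in> ?S" and z_max: "\<And>w. w \<in> ?S \<Longrightarrow> Re w \<le> Re z"
    using Max_in[of "Re ` ?S"] Max_ge[of "Re ` ?S"] S by fastforce
  show ?thesis
  proof (rule ccontr)
    assume "\<nexists>z. eigenvalue ?A z \<and> r \<le> Re z"
    then have "Re z < r" using z by (auto simp: spectrum_def)
    define s where "s = (Re z + r) / 2"
    have "s < r" using \<open>Re z < r\<close> by (simp add: s_def)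
    have below: "Re w < s" if "w \<in> ?S" for w
      using z_max[OF that] \<open>Re z < r\<close> by (simp add: s_def)
    have "eventually (\<lambda>c. \<forall>w\<in>?S. cmod (w + complex_of_real c) < s + c) at_top"
      using eventually_norm_add_real_less[OF below] by (intro eventually_ball_finite[OF S(1)]) auto
    moreover have "eventually (\<lambda>c. 0 < c \<and> 0 < s + c) at_top"
      using eventually_gt_at_top[of "max 0 (- s)"] by (rule eventually_mono) auto
    ultimately have "eventually (\<lambda>c. (\<forall>w\<in>?S. cmod (w + complex_of_real c) < s + c) \<and> 0 < c \<and> 0 < s + c) at_top"
      by (rule eventually_conj)
    then obtain c where close: "\<And>w. w \<in> ?S \<Longrightarrow> cmod (w + complex_of_real c) < s + c"
      and c: "0 < c" and "0 < s + c"
      unfolding eventually_at_top_linorder by blast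
    define t where "t = s + c"
    have t: "0 < t" using \<open>0 < s + c\<close> by (simp add: t_def)
    define D where "D = inverse t \<cdot>\<^sub>m (A + c \<cdot>\<^sub>m 1\<^sub>m n)"
    have D: "D \<in> carrier_mat n n" using A by (simp add: D_def)
    have D_nonneg: "0 \<le> D $$ (i, j)" if "i < n" "j < n" for i j
      using that A nonneg c t by (simp add: D_def)
    have D_rows: "(r + c) / t \<le> (\<Sum>j<n. D $$ (i, j))" if i: "i < n" for i
    proof -
      have "(\<Sum>j<n. D $$ (i, j)) = ((\<Sum>j<n. A $$ (i, j)) + c) / t"
        using A i by (simp add: D_def sum_divide_distrib[symmetric] sum.distrib sum_distrib_left
            field_simps if_distrib[of "(*) c"])
      then show ?thesis using rows[OF i] t by (simp add: divide_right_mono)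
    qed
    have "spectral_radius (map_mat complex_of_real D) < 1"
    proof -
      let ?D = "map_mat complex_of_real D"
      obtain \<nu> where \<nu>: "\<nu> \<in> spectrum ?D" and radius: "spectral_radius ?D = cmod \<nu>"
        using spectral_radius_mem_max(1)[of ?D n] D n by auto
      have D_shift: "?D = inverse (complex_of_real t) \<cdot>\<^sub>m (?A + complex_of_real c \<cdot>\<^sub>m 1\<^sub>m n)"
        using A by (intro eq_matI) (auto simp: D_def)
      have "complex_of_real t \<noteq> 0" using t by simp
      then have "eigenvalue ?A (complex_of_real t * \<nu> - complex_of_real c)"
        using \<nu> D_shift by (intro eigenvalue_shift_scale[OF A']) (simp_all add: spectrum_def)
      then have "cmod (complex_of_real t * \<nu>) < t"
        using close[of "complex_of_real t * \<nu> - complex_of_real c"] by (simp add: spectrum_def t_def)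
      then show ?thesis
        using t by (simp add: radius norm_mult)
    qed
    then have "(r + c) / t \<le> 1"
      using row_sum_bound_le_1_if_spectral_radius_less_1[OF D n D_nonneg D_rows] by blast
    then show False
      using \<open>s < r\<close> t by (simp add: t_def)
  qed
qed

section \<open>The matrix \<open>I - W\<close> of a CTLN\<close>

lemma legal_params_bounds:
  assumes "legal_params \<epsilon> \<delta>"
  shows "0 < \<delta>" "0 < \<epsilon>" "\<epsilon> < 1"
proof -
  show "0 < \<delta>" "0 < \<epsilon>" using assms by (auto simp: legal_params_def)
  have "\<delta> / (\<delta> + 1) < 1" using \<open>0 < \<delta>\<close> by simp
  then show "\<epsilon> < 1" using assms unfolding legal_params_def by linarith
qed

lemma card_ge_2_if_not_clique:
  assumes "finite \<sigma>" "\<not> is_clique G \<sigma>"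
  shows "2 \<le> card \<sigma>"
proof -
  obtain x y where "x \<in> \<sigma>" "y \<in> \<sigma>" "x \<noteq> y"
    using assms(2) by (auto simp: is_clique_def)
  then have "card {x, y} \<le> card \<sigma>" using assms(1) by (intro card_mono) auto
  with \<open>x \<noteq> y\<close> show ?thesis by simp
qed

lemma sum_nth_sorted_list_of_set:
  assumes "finite \<sigma>"
  shows "(\<Sum>i<card \<sigma>. f (sorted_list_of_set \<sigma> ! i)) = (\<Sum>u\<in>\<sigma>. f u)"
proof -
  have "(\<Sum>u\<in>\<sigma>. f u) = sum_list (map f (sorted_list_of_set \<sigma>))"
    using assms by (simp add: sum_list_distinct_conv_sum_set)
  also have "\<dots> = (\<Sum>i<card \<sigma>. f (sorted_list_of_set \<sigma> ! i))"
    using assms by (simp add: sum_list_sum_nth atLeast0LessThan)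
  finally show ?thesis by simp
qed

definition IminusW_entry :: "(nat \<Rightarrow> nat \<Rightarrow> bool) \<Rightarrow> real \<Rightarrow> real \<Rightarrow> nat \<Rightarrow> nat \<Rightarrow> real" where
  "IminusW_entry G \<epsilon> \<delta> u v = of_bool (u = v) - ctln G \<epsilon> \<delta> u v"

lemma IminusW_entry_cases:
  "IminusW_entry G \<epsilon> \<delta> u u = 1"
  "u \<noteq> v \<Longrightarrow> IminusW_entry G \<epsilon> \<delta> u v = (if G v u then 1 - \<epsilon> else 1 + \<delta>)"
  by (auto simp: IminusW_entry_def ctln_def)

lemma IminusW_carrier: "IminusW G \<epsilon> \<delta> \<sigma> \<in> carrier_mat (card \<sigma>) (card \<sigma>)"
  unfolding IminusW_def ctln_sub_def Let_def by (intro minus_carrier_mat) auto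

lemma IminusW_index:
  assumes "finite \<sigma>" "i < card \<sigma>" "j < card \<sigma>"
  shows "IminusW G \<epsilon> \<delta> \<sigma> $$ (i, j) =
    IminusW_entry G \<epsilon> \<delta> (sorted_list_of_set \<sigma> ! i) (sorted_list_of_set \<sigma> ! j)"
proof -
  have "sorted_list_of_set \<sigma> ! i = sorted_list_of_set \<sigma> ! j \<longleftrightarrow> i = j"
    using assms by (simp add: nth_eq_iff_index_eq)
  then show ?thesis
    using assms by (simp add: IminusW_def ctln_sub_def Let_def IminusW_entry_def)
qed

lemma trace_IminusW:
  assumes "finite \<sigma>"
  shows "trace_mat (IminusW G \<epsilon> \<delta> \<sigma>) = real (card \<sigma>)"
  using assms IminusW_carrier[of G \<epsilon> \<delta> \<sigma>]
  by (simp add: trace_mat_def IminusW_index IminusW_entry_cases)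

lemma trace_IminusW_square:
  assumes "finite \<sigma>"
  shows "trace_mat (IminusW G \<epsilon> \<delta> \<sigma> * IminusW G \<epsilon> \<delta> \<sigma>) =
    (\<Sum>u\<in>\<sigma>. \<Sum>v\<in>\<sigma>. IminusW_entry G \<epsilon> \<delta> u v * IminusW_entry G \<epsilon> \<delta> v u)"
proof -
  let ?s = "sorted_list_of_set \<sigma>" and ?e = "IminusW_entry G \<epsilon> \<delta>"
  have "trace_mat (IminusW G \<epsilon> \<delta> \<sigma> * IminusW G \<epsilon> \<delta> \<sigma>) =
      (\<Sum>i<card \<sigma>. \<Sum>j<card \<sigma>. ?e (?s ! i) (?s ! j) * ?e (?s ! j) (?s ! i))"
    using assms IminusW_carrier[of G \<epsilon> \<delta> \<sigma>]
    by (simp add: trace_mat_def scalar_prod_def atLeast0LessThan IminusW_index)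
  also have "\<dots> = (\<Sum>i<card \<sigma>. \<Sum>v\<in>\<sigma>. ?e (?s ! i) v * ?e v (?s ! i))"
    using sum_nth_sorted_list_of_set[OF assms, where f = "\<lambda>v. ?e (?s ! _) v * ?e v (?s ! _)"]
    by simp
  also have "\<dots> = (\<Sum>u\<in>\<sigma>. \<Sum>v\<in>\<sigma>. ?e u v * ?e v u)"
    by (rule sum_nth_sorted_list_of_set[OF assms, where f = "\<lambda>u. \<Sum>v\<in>\<sigma>. ?e u v * ?e v u"])
  finally show ?thesis .
qed

lemma row_sum_IminusW:
  assumes "finite \<sigma>" "i < card \<sigma>"
  shows "(\<Sum>j<card \<sigma>. IminusW G \<epsilon> \<delta> \<sigma> $$ (i, j)) =
    (\<Sum>v\<in>\<sigma>. IminusW_entry G \<epsilon> \<delta> (sorted_list_of_set \<sigma> ! i) v)"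
  using assms by (simp add: IminusW_index sum_nth_sorted_list_of_set)

lemma IminusW_entry_row_sum:
  assumes "finite \<sigma>" "u \<in> \<sigma>"
  shows "(\<Sum>v\<in>\<sigma>. IminusW_entry G \<epsilon> \<delta> u v) =
    1 + (1 + \<delta>) * (real (card \<sigma>) - 1) - (\<epsilon> + \<delta>) * real (in_degree_sub G \<sigma> u)"
proof -
  let ?in = "{v \<in> \<sigma> - {u}. G v u}"
  have "(\<Sum>v\<in>\<sigma>. IminusW_entry G \<epsilon> \<delta> u v) = 1 + (\<Sum>v\<in>\<sigma> - {u}. IminusW_entry G \<epsilon> \<delta> u v)"
    using assms by (simp add: sum.remove IminusW_entry_cases)
  also have "(\<Sum>v\<in>\<sigma> - {u}. IminusW_entry G \<epsilon> \<delta> u v)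
      = (\<Sum>v\<in>\<sigma> - {u}. (1 + \<delta>) - (if G v u then \<epsilon> + \<delta> else 0))"
    by (intro sum.cong) (auto simp: IminusW_entry_cases)
  also have "\<dots> = (1 + \<delta>) * (real (card \<sigma>) - 1) - (\<epsilon> + \<delta>) * real (card ?in)"
    using assms card_gt_0_iff[of \<sigma>]
    by (auto simp: sum_subtractf sum.If_cases Int_def Suc_le_eq)
  also have "?in = {v \<in> \<sigma>. v \<noteq> u \<and> G v u}" by auto
  finally show ?thesis by (simp add: in_degree_sub_def)
qed

lemma IminusW_entry_ge:
  assumes "legal_params \<epsilon> \<delta>"
  shows "1 - \<epsilon> \<le> IminusW_entry G \<epsilon> \<delta> u v"
  using legal_params_bounds[OF assms] by (cases "u = v") (auto simp: IminusW_entry_cases)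

lemma IminusW_nonneg:
  assumes "legal_params \<epsilon> \<delta>" "finite \<sigma>" "i < card \<sigma>" "j < card \<sigma>"
  shows "0 \<le> IminusW G \<epsilon> \<delta> \<sigma> $$ (i, j)"
  using IminusW_entry_ge[OF assms(1)] legal_params_bounds[OF assms(1)] assms(2-)
  by (simp add: IminusW_index) (meson diff_ge_0_iff_ge less_imp_le order_trans)

lemma sum_ge_sum_plus_two_excess:
  fixes f b :: "'a \<Rightarrow> real"
  assumes "finite S" "p \<in> S" "q \<in> S" "p \<noteq> q" "\<And>x. x \<in> S \<Longrightarrow> b x \<le> f x"
    and "b p + e \<le> f p" "b q + e \<le> f q"
  shows "sum b S + 2 * e \<le> sum f S"
proof -
  have "2 * e \<le> (\<Sum>x\<in>{p, q}. f x - b x)"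
    using assms(4,6,7) by simp
  also have "\<dots> \<le> (\<Sum>x\<in>S. f x - b x)"
    using assms(1-3,5) by (intro sum_mono2) auto
  finally show ?thesis by (simp add: sum_subtractf)
qed

lemma card_square_le_trace_IminusW_square:
  assumes legal: "legal_params \<epsilon> \<delta>" and fin: "finite \<sigma>" and nc: "\<not> is_clique G \<sigma>"
    and \<delta>: "\<epsilon> / (1 - \<epsilon>) * ((real (card \<sigma>))\<^sup>2 - real (card \<sigma>) - 1) < \<delta>"
  shows "(real (card \<sigma>))\<^sup>2 \<le> trace_mat (IminusW G \<epsilon> \<delta> \<sigma> * IminusW G \<epsilon> \<delta> \<sigma>)"
proof -
  note bounds = legal_params_bounds[OF legal]
  let ?e = "IminusW_entry G \<epsilon> \<delta>" and ?k = "real (card \<sigma>)"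
  obtain x y where xy: "x \<in> \<sigma>" "y \<in> \<sigma>" "x \<noteq> y" "\<not> G y x"
    using nc unfolding is_clique_def by blast
  define f where "f = (\<lambda>(u, v). ?e u v * ?e v u)"
  define b where "b = (\<lambda>(u, v :: nat). if u = v then 1 else 1 - 2 * \<epsilon>)"
  define excess where "excess = (1 + \<delta>) * (1 - \<epsilon>) - (1 - 2 * \<epsilon>)"
  have "b p \<le> f p" for p
  proof (cases p)
    case (Pair u v)
    have "1 - 2 * \<epsilon> \<le> (1 - \<epsilon>) * (1 - \<epsilon>)" by (simp add: algebra_simps)
    also have "\<dots> \<le> ?e u v * ?e v u"
      using IminusW_entry_ge[OF legal, of G u v] IminusW_entry_ge[OF legal, of G v u] bounds
      by (intro mult_mono; linarith)
    finally show ?thesis by (auto simp: Pair b_def f_def IminusW_entry_cases(1))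
  qed
  moreover have "b (x, y) + excess \<le> f (x, y)" "b (y, x) + excess \<le> f (y, x)"
    using xy bounds IminusW_entry_ge[OF legal, of G y x]
    by (auto simp: b_def f_def excess_def IminusW_entry_cases mult.commute intro: mult_left_mono)
  ultimately have "sum b (\<sigma> \<times> \<sigma>) + 2 * excess \<le> sum f (\<sigma> \<times> \<sigma>)"
    using fin xy by (intro sum_ge_sum_plus_two_excess[of _ "(x, y)" "(y, x)"]) auto
  moreover have "sum b (\<sigma> \<times> \<sigma>) = ?k * (?k * (1 - 2 * \<epsilon>) + 2 * \<epsilon>)"
  proof -
    have "sum b (\<sigma> \<times> \<sigma>) = (\<Sum>u\<in>\<sigma>. \<Sum>v\<in>\<sigma>. (1 - 2 * \<epsilon>) + (if u = v then 2 * \<epsilon> else 0))"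
      by (simp add: sum.cartesian_product b_def if_distrib cong: if_cong)
    also have "\<dots> = ?k * (?k * (1 - 2 * \<epsilon>) + 2 * \<epsilon>)"
      using fin by (simp add: sum.distrib)
    finally show ?thesis .
  qed
  moreover have "trace_mat (IminusW G \<epsilon> \<delta> \<sigma> * IminusW G \<epsilon> \<delta> \<sigma>) = sum f (\<sigma> \<times> \<sigma>)"
    using fin by (simp add: trace_IminusW_square sum.cartesian_product f_def)
  moreover have "\<epsilon> * (?k\<^sup>2 - ?k - 1) < \<delta> * (1 - \<epsilon>)"
    using \<delta> bounds by (simp add: pos_divide_less_eq mult.commute)
  ultimately show ?thesis
    by (simp add: excess_def power2_eq_square algebra_simps)
qed

lemma IminusW_row_sum_ge:
  assumes legal: "legal_params \<epsilon> \<delta>" and fin: "finite \<sigma>" and i: "i < card \<sigma>"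
  shows "1 + (1 + \<delta>) * (real (card \<sigma>) - 1) - (\<epsilon> + \<delta>) * real (max_in_degree_sub G \<sigma>)
    \<le> (\<Sum>j<card \<sigma>. IminusW G \<epsilon> \<delta> \<sigma> $$ (i, j))"
proof -
  let ?u = "sorted_list_of_set \<sigma> ! i"
  have u: "?u \<in> \<sigma>" using fin i by (metis length_sorted_list_of_set nth_mem set_sorted_list_of_set)
  have "in_degree_sub G \<sigma> ?u \<le> max_in_degree_sub G \<sigma>"
    using fin u by (simp add: max_in_degree_sub_def)
  then have "(\<epsilon> + \<delta>) * real (in_degree_sub G \<sigma> ?u) \<le> (\<epsilon> + \<delta>) * real (max_in_degree_sub G \<sigma>)"
    using legal_params_bounds[OF legal] by (intro mult_left_mono) auto
  then show ?thesis
    using fin i u by (simp add: row_sum_IminusW IminusW_entry_row_sum)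
qed

lemma not_stable_motif_if_not_clique:
  assumes legal: "legal_params \<epsilon> \<delta>" and fin: "finite \<sigma>" and nc: "\<not> is_clique G \<sigma>"
    and \<delta>: "\<epsilon> / (1 - \<epsilon>) * ((real (card \<sigma>))\<^sup>2 - real (card \<sigma>) - 1) < \<delta>"
  shows "\<not> stable_motif G \<epsilon> \<delta> \<theta> \<sigma>"
proof
  let ?A = "IminusW G \<epsilon> \<delta> \<sigma>"
  assume "stable_motif G \<epsilon> \<delta> \<theta> \<sigma>"
  then have "trace_mat (?A * ?A) < (trace_mat ?A)\<^sup>2"
    using card_ge_2_if_not_clique[OF fin nc]
    by (intro trace_square_less_if_eigenvalues_Re_pos[OF IminusW_carrier]) (auto simp: stable_motif_def)
  then show False
    using card_square_le_trace_IminusW_square[OF legal fin nc \<delta>] by (simp add: trace_IminusW[OF fin])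
qed

lemma not_stable_motif_if_small_in_degree:
  assumes legal: "legal_params \<epsilon> \<delta>" and fin: "finite \<sigma>"
    and d: "max_in_degree_sub G \<sigma> = d" "real d < real (card \<sigma>) - 1"
    and \<delta>: "\<epsilon> * real d / (real (card \<sigma>) - 1 - real d) < \<delta>"
  shows "\<not> stable_motif G \<epsilon> \<delta> \<theta> \<sigma>"
proof
  let ?A = "IminusW G \<epsilon> \<delta> \<sigma>" and ?k = "real (card \<sigma>)"
  assume "stable_motif G \<epsilon> \<delta> \<theta> \<sigma>"
  then have Re_pos: "0 \<le> Re z" if "eigenvalue (map_mat complex_of_real ?A) z" for z
    using that by (auto simp: stable_motif_def less_imp_le)
  define r where "r = 1 + (1 + \<delta>) * (?k - 1) - (\<epsilon> + \<delta>) * real d"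
  obtain z where z: "eigenvalue (map_mat complex_of_real ?A) z" and "r \<le> Re z"
    using nonneg_mat_eigenvalue_Re_ge_row_sum[OF IminusW_carrier _ IminusW_nonneg[OF legal fin]]
      IminusW_row_sum_ge[OF legal fin] d by (fastforce simp: r_def)
  moreover have "Re z \<le> ?k"
    using Re_eigenvalue_le_trace[OF IminusW_carrier Re_pos z] by (simp add: trace_IminusW[OF fin])
  moreover have "\<epsilon> * real d < \<delta> * (?k - 1 - real d)"
    using \<delta> d by (simp add: pos_divide_less_eq)
  ultimately show False by (simp add: r_def algebra_simps)
qed

theorem theorem2:
  fixes n :: nat and G :: "nat \<Rightarrow> nat \<Rightarrow> bool" and \<sigma> :: "nat set"
    and \<epsilon> \<delta> \<theta> :: real
  assumes "simple_digraph n G"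
    and "\<sigma> \<subseteq> {1..n}"
    and "\<theta> > 0"
    and "legal_params \<epsilon> \<delta>"
    and "nondegenerate n G \<epsilon> \<delta> \<theta>"
  shows "(\<not> is_clique G \<sigma> \<and>
          \<delta> > \<epsilon> / (1 - \<epsilon>) * (real (card \<sigma>) ^ 2 - real (card \<sigma>) - 1)
          \<longrightarrow> \<not> stable_motif G \<epsilon> \<delta> \<theta> \<sigma>)
       \<and> (\<forall>d. max_in_degree_sub G \<sigma> = d \<and> real d < real (card \<sigma>) - 1 \<and>
              \<delta> > \<epsilon> * real d / (real (card \<sigma>) - 1 - real d)
              \<longrightarrow> \<not> stable_motif G \<epsilon> \<delta> \<theta> \<sigma>)"
proof -
  have "finite \<sigma>" using assms(2) by (rule finite_subset) simp
  then show ?thesis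
    using not_stable_motif_if_not_clique not_stable_motif_if_small_in_degree assms(4) by blast
qed

end
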